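(* Let $\kappa,\lambda$ be regular cardinals with $\aleph_0<\kappa$ and $\kappa^+<\lambda$, and let $S\subseteq\{\delta<\lambda:\operatorname{cf}\delta=\kappa\}$ be stationary in $\lambda$. Let $\langle c_\delta:\delta\in S\rangle$ be any sequence such that each $c_\delta\subseteq\delta$ is a club of $\delta$ of order type $\kappa$, and let $E'\subseteq\lambda$ be a club. Then there is a club $E\subseteq E'$ such that, setting $c'_\delta=c_\delta\cap E$ for $\delta\in S$: (1) each $c'_\delta$ is a closed subset of $\delta$; (2) for every club $E''\subseteq\lambda$ the set $\{\delta\in S: c'_\delta\subseteq E'',\ \sup c'_\delta=\delta,\ \operatorname{otp}c'_\delta=\kappa\}$ is stationary in $\lambda$.
   Context: $\operatorname{otp}$ denotes order type; a club of $\lambda$ is a closed unbounded subset of $\lambda$. *)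

theory Defs
  imports Main
begin

text \<open>Ordinals below a cardinal lambda are modelled as the elements of the field of a
  well-order r (a cardinal order, i.e. an initial ordinal).  (a,b) in r means a \<le> b.\<close>

definition olt :: "'a rel \<Rightarrow> 'a \<Rightarrow> 'a \<Rightarrow> bool" where
  "olt r a b \<longleftrightarrow> (a, b) \<in> r \<and> a \<noteq> b"

definition limit_point :: "'a rel \<Rightarrow> 'a set \<Rightarrow> 'a \<Rightarrow> bool" where
  "limit_point r C \<gamma> \<longleftrightarrow> \<gamma> \<in> Field r \<and> (\<exists>\<beta>\<in>C. olt r \<beta> \<gamma>) \<and>
     (\<forall>\<alpha>. olt r \<alpha> \<gamma> \<longrightarrow> (\<exists>\<beta>\<in>C. olt r \<alpha> \<beta> \<and> olt r \<beta> \<gamma>))"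

definition closed_below :: "'a rel \<Rightarrow> 'a \<Rightarrow> 'a set \<Rightarrow> bool" where
  "closed_below r \<delta> C \<longleftrightarrow> C \<subseteq> underS r \<delta> \<and>
     (\<forall>\<gamma>\<in>underS r \<delta>. limit_point r C \<gamma> \<longrightarrow> \<gamma> \<in> C)"

definition unbounded_below :: "'a rel \<Rightarrow> 'a \<Rightarrow> 'a set \<Rightarrow> bool" where
  "unbounded_below r \<delta> C \<longleftrightarrow> C \<subseteq> underS r \<delta> \<and>
     (\<forall>\<alpha>\<in>underS r \<delta>. \<exists>\<beta>\<in>C. (\<alpha>, \<beta>) \<in> r)"

definition club_below :: "'a rel \<Rightarrow> 'a \<Rightarrow> 'a set \<Rightarrow> bool" where
  "club_below r \<delta> C \<longleftrightarrow> closed_below r \<delta> C \<and> unbounded_below r \<delta> C"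

definition club :: "'a rel \<Rightarrow> 'a set \<Rightarrow> bool" where
  "club r C \<longleftrightarrow> C \<subseteq> Field r \<and>
     (\<forall>\<gamma>\<in>Field r. limit_point r C \<gamma> \<longrightarrow> \<gamma> \<in> C) \<and>
     (\<forall>\<alpha>\<in>Field r. \<exists>\<beta>\<in>C. (\<alpha>, \<beta>) \<in> r)"

definition stationary :: "'a rel \<Rightarrow> 'a set \<Rightarrow> bool" where
  "stationary r S \<longleftrightarrow> S \<subseteq> Field r \<and> (\<forall>C. club r C \<longrightarrow> S \<inter> C \<noteq> {})"

definition cof_eq :: "'a rel \<Rightarrow> 'a \<Rightarrow> 'b rel \<Rightarrow> bool" where
  "cof_eq r \<delta> k \<longleftrightarrow> (\<exists>K. unbounded_below r \<delta> K \<and> ordIso2 (card_of K) k) \<and>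
     (\<forall>K. unbounded_below r \<delta> K \<longrightarrow> ordLeq2 k (card_of K))"

definition sup_eq :: "'a rel \<Rightarrow> 'a set \<Rightarrow> 'a \<Rightarrow> bool" where
  "sup_eq r C \<delta> \<longleftrightarrow> \<delta> \<in> Field r \<and> (\<forall>\<beta>\<in>C. (\<beta>, \<delta>) \<in> r) \<and>
     (\<forall>\<gamma>\<in>Field r. (\<forall>\<beta>\<in>C. (\<beta>, \<gamma>) \<in> r) \<longrightarrow> (\<delta>, \<gamma>) \<in> r)"

definition otp_eq :: "'a rel \<Rightarrow> 'a set \<Rightarrow> 'b rel \<Rightarrow> bool" where
  "otp_eq r C k \<longleftrightarrow> ordIso2 (Restr r C) k"

end

theory Submission
  imports Defs
begin

text \<open>Suppose no club \<open>E \<subseteq> E'\<close> works. Every \<open>c\<^sub>\<delta> \<inter> E\<close> is closed, so for each club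
  \<open>E \<subseteq> E'\<close> some club \<open>E''\<close> makes the set of good \<open>\<delta>\<close> nonstationary. At a \<open>\<delta> \<in> S\<close> that is
  a limit point of \<open>E\<close>, \<open>cf \<delta> = \<kappa> > \<aleph>\<^sub>0\<close> makes \<open>c\<^sub>\<delta> \<inter> E\<close> unbounded in \<open>\<delta>\<close>, hence of
  supremum \<open>\<delta>\<close> and order type \<open>\<kappa>\<close>. So intersecting \<open>E''\<close>, a club disjoint from the good \<open>\<delta>\<close>
  and the club of limit points of \<open>E\<close> gives a club \<open>G E\<close> with \<open>c\<^sub>\<delta> \<inter> E \<nsubseteq> G E\<close> for
  every \<open>\<delta> \<in> S \<inter> G E\<close>. Iterate \<open>E\<^sub>i = E' \<inter> \<Inter>{G E\<^sub>j | j < i}\<close> along \<open>\<kappa>\<^sup>+ < \<lambda>\<close>: by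
  regularity of \<open>\<lambda>\<close> the intersection of all \<open>G E\<^sub>j\<close> is a club, so it contains some \<open>\<delta> \<in> S\<close>,
  and points \<open>x\<^sub>j \<in> c\<^sub>\<delta> \<inter> E\<^sub>j - G E\<^sub>j\<close> are pairwise distinct: \<open>\<kappa>\<^sup>+\<close> points in a set of
  size \<open>\<kappa>\<close>.\<close>

unbundle cardinal_syntax

section \<open>Closed unbounded sets\<close>

lemma underS_iff_olt: "x \<in> underS r \<delta> \<longleftrightarrow> olt r x \<delta>"
  unfolding underS_def olt_def by blast

lemma limit_point_mono: "limit_point r C \<gamma> \<Longrightarrow> C \<subseteq> D \<Longrightarrow> limit_point r D \<gamma>"
  unfolding limit_point_def by blast

lemma club_subset_Field: "club r E \<Longrightarrow> E \<subseteq> Field r"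
  unfolding club_def by blast

lemma club_limit_point_mem: "club r E \<Longrightarrow> limit_point r E \<gamma> \<Longrightarrow> \<gamma> \<in> E"
  unfolding club_def limit_point_def by blast

lemma club_below_subset_Field: "club_below r \<delta> C \<Longrightarrow> C \<subseteq> Field r"
  unfolding club_below_def unbounded_below_def underS_def by (blast intro: FieldI1)

lemma closed_below_Int_club:
  assumes C: "closed_below r \<delta> C" and E: "club r E"
  shows "closed_below r \<delta> (C \<inter> E)"
  unfolding closed_below_def
proof (intro conjI ballI impI)
  show "C \<inter> E \<subseteq> underS r \<delta>" using C unfolding closed_below_def by blast
  fix \<gamma> assume \<gamma>: "\<gamma> \<in> underS r \<delta>" "limit_point r (C \<inter> E) \<gamma>"
  have "\<gamma> \<in> C" using C \<gamma>(1) limit_point_mono[OF \<gamma>(2)] unfolding closed_below_def by blast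
  moreover have "\<gamma> \<in> E" using club_limit_point_mem[OF E limit_point_mono[OF \<gamma>(2)]] by blast
  ultimately show "\<gamma> \<in> C \<inter> E" by blast
qed

section \<open>Order types and cardinalities\<close>

lemma (in wo_rel) inflationary_if_compat_inj:
  assumes compat: "compat r r f" and inj: "inj_on f (Field r)"
    and maps: "f ` Field r \<subseteq> Field r" and x: "x \<in> Field r"
  shows "(x, f x) \<in> r"
  using x
proof (induction x rule: well_order_induct)
  case (1 x)
  show ?case
  proof (rule ccontr)
    assume not_le: "(x, f x) \<notin> r"
    have fx: "f x \<in> Field r" using maps 1(2) by blast
    have below: "(f x, x) \<in> r" "f x \<noteq> x"
      using TOTALS 1(2) fx not_le REFL by (auto simp: refl_on_def)
    have "(f (f x), f x) \<in> r" using compat below(1) unfolding compat_def by blast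
    moreover have "f (f x) \<noteq> f x" using inj below(2) fx 1(2) by (auto dest: inj_onD)
    moreover have "(f x, f (f x)) \<in> r" using 1(1) below fx by blast
    ultimately show False using ANTISYM by (auto dest: antisymD)
  qed
qed

lemma Restr_ordLeq:
  assumes W: "Well_order r" and A: "A \<subseteq> Field r"
  shows "Restr r A \<le>o r"
proof (rule ccontr)
  interpret wo_rel r using W by (rule wo_rel.intro)
  let ?R = "Restr r A"
  assume "\<not> ?R \<le>o r"
  then have "r <o ?R" using not_ordLeq_iff_ordLess[OF W Well_order_Restr[OF W]] by blast
  then obtain a where a: "a \<in> Field ?R" and "r =o Restr ?R (Order_Relation.underS ?R a)"
    using ordLess_iff_ordIso_Restr[OF Well_order_Restr[OF W] W] by blast
  then obtain f where f: "iso r (Restr ?R (Order_Relation.underS ?R a)) f"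
    unfolding ordIso_def by blast
  have maps_below: "(f x, a) \<in> r \<and> f x \<noteq> a" if "x \<in> Field r" for x
  proof -
    have "f x \<in> Field (Restr ?R (Order_Relation.underS ?R a))"
      using f that unfolding iso_def bij_betw_def by blast
    then show ?thesis unfolding Field_def Order_Relation.underS_def by blast
  qed
  have "compat r r f"
    using embed_compat[of r _ f] f unfolding iso_def compat_def by blast
  moreover have "inj_on f (Field r)" using f unfolding iso_def bij_betw_def by blast
  moreover have "f ` Field r \<subseteq> Field r" using maps_below by (blast intro: FieldI1)
  moreover have aF: "a \<in> Field r" using a unfolding Field_def by blast
  ultimately have "(a, f a) \<in> r" by (rule inflationary_if_compat_inj)
  then show False using maps_below[OF aF] ANTISYM by (auto dest: antisymD)
qed

lemma card_of_ordLeq_if_otp_eq: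
  assumes "Well_order r" "C \<subseteq> Field r" "otp_eq r C k"
  shows "|C| \<le>o k"
  using card_of_least[OF well_order_on_Restr[OF assms(1,2)]] assms(3)
  unfolding otp_eq_def by (rule ordLeq_ordIso_trans)

lemma card_of_Field_ordLeq_if_escaping:
  assumes total: "Total s"
    and descending: "\<And>i j. (j, i) \<in> s \<Longrightarrow> j \<noteq> i \<Longrightarrow> A i \<subseteq> B j"
    and escaping: "\<And>j. j \<in> Field s \<Longrightarrow> \<not> C \<inter> A j \<subseteq> B j"
  shows "|Field s| \<le>o |C|"
proof -
  have "\<exists>y. y \<in> C \<inter> A j \<and> y \<notin> B j" if "j \<in> Field s" for j
    using escaping[OF that] by blast
  then obtain x where x: "\<And>j. j \<in> Field s \<Longrightarrow> x j \<in> C \<inter> A j \<and> x j \<notin> B j" by metis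
  have "inj_on x (Field s)"
  proof (rule inj_onI)
    fix i j assume i: "i \<in> Field s" and j: "j \<in> Field s" and eq: "x i = x j"
    show "i = j"
    proof (rule ccontr)
      assume "i \<noteq> j"
      then have "(j, i) \<in> s \<and> j \<noteq> i \<or> (i, j) \<in> s \<and> i \<noteq> j"
        using total i j unfolding total_on_def by blast
      then show False using descending[of j i] descending[of i j] x[OF i] x[OF j] eq
        by (metis IntD2 subsetD)
    qed
  qed
  moreover have "x ` Field s \<subseteq> C" using x by blast
  ultimately show ?thesis using card_of_ordLeq by blast
qed

section \<open>Limit points below an ordinal of uncountable cofinality\<close>

context wo_rel
begin

lemma olt_imp_le: "olt r a b \<Longrightarrow> (a, b) \<in> r"
  unfolding olt_def by simp

lemma olt_FieldD:
  assumes "olt r a b"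
  shows "a \<in> Field r" "b \<in> Field r"
  using assms unfolding olt_def by (auto intro: FieldI1 FieldI2)

lemma olt_le_trans: "olt r a b \<Longrightarrow> (b, c) \<in> r \<Longrightarrow> olt r a c"
  unfolding olt_def using TRANS ANTISYM by (metis antisymD transD)

lemma le_olt_trans: "(a, b) \<in> r \<Longrightarrow> olt r b c \<Longrightarrow> olt r a c"
  unfolding olt_def using TRANS ANTISYM by (metis antisymD transD)

lemma olt_trans: "olt r a b \<Longrightarrow> olt r b c \<Longrightarrow> olt r a c"
  using olt_le_trans olt_imp_le by blast

lemma olt_not_le: "olt r a b \<Longrightarrow> (b, a) \<notin> r"
  unfolding olt_def using ANTISYM by (metis antisymD)

lemma le_or_olt: "a \<in> Field r \<Longrightarrow> b \<in> Field r \<Longrightarrow> (a, b) \<in> r \<or> olt r b a"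
  unfolding olt_def using TOTALS REFL by (metis refl_onD)

lemma bounded_increasing_seq_sup:
  assumes incr: "\<And>n. olt r (f n) (f (Suc n))" and bound: "\<And>n. (f n, u) \<in> r"
  obtains \<gamma> where "(\<gamma>, u) \<in> r" "\<And>n. olt r (f n) \<gamma>" "\<And>\<alpha>. olt r \<alpha> \<gamma> \<Longrightarrow> \<exists>n. olt r \<alpha> (f n)"
proof -
  define B where "B = {b \<in> Field r. \<forall>n. (f n, b) \<in> r}"
  have B: "B \<subseteq> Field r" "u \<in> B" using bound unfolding B_def by (auto intro: FieldI2)
  define \<gamma> where "\<gamma> = minim B"
  have \<gamma>B: "\<gamma> \<in> B" and \<gamma>_least: "\<And>b. b \<in> B \<Longrightarrow> (\<gamma>, b) \<in> r"
    unfolding \<gamma>_def using minim_in minim_least B by blast+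
  have "olt r (f n) \<gamma>" for n
    using incr[of n] \<gamma>B olt_le_trans unfolding B_def by blast
  moreover have "\<exists>n. olt r \<alpha> (f n)" if \<alpha>: "olt r \<alpha> \<gamma>" for \<alpha>
  proof -
    have "\<alpha> \<notin> B" using \<gamma>_least \<alpha> olt_not_le by blast
    then obtain n where "(f n, \<alpha>) \<notin> r" using olt_FieldD(1)[OF \<alpha>] unfolding B_def by blast
    then show ?thesis using le_or_olt olt_FieldD incr \<alpha> by blast
  qed
  ultimately show ?thesis using that \<gamma>_least B by blast
qed

lemma limit_point_if_interleaved:
  assumes sup: "\<And>n. olt r (f n) \<gamma>" "\<And>\<alpha>. olt r \<alpha> \<gamma> \<Longrightarrow> \<exists>n. olt r \<alpha> (f n)"
    and between: "\<And>n. \<exists>x\<in>X. olt r (f n) x \<and> (x, f (Suc n)) \<in> r"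
  shows "limit_point r X \<gamma>"
  unfolding limit_point_def
proof (intro conjI allI impI)
  show "\<gamma> \<in> Field r" using sup(1) olt_FieldD by blast
  show "\<exists>\<beta>\<in>X. olt r \<beta> \<gamma>" using between[of 0] sup(1)[of 1] le_olt_trans by auto
  fix \<alpha> assume "olt r \<alpha> \<gamma>"
  then obtain n where "olt r \<alpha> (f n)" using sup(2) by blast
  then show "\<exists>\<beta>\<in>X. olt r \<alpha> \<beta> \<and> olt r \<beta> \<gamma>"
    using between[of n] sup(1)[of "Suc n"] olt_trans le_olt_trans by blast
qed

lemma limit_point_limit_points:
  assumes "limit_point r {\<beta>. limit_point r E \<beta>} \<gamma>"
  shows "limit_point r E \<gamma>"
  unfolding limit_point_def
proof (intro conjI allI impI)
  show "\<gamma> \<in> Field r" using assms unfolding limit_point_def by blast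
  obtain \<beta> where "limit_point r E \<beta>" "olt r \<beta> \<gamma>" using assms unfolding limit_point_def by blast
  then show "\<exists>x\<in>E. olt r x \<gamma>" using olt_trans unfolding limit_point_def by blast
  fix \<alpha> assume "olt r \<alpha> \<gamma>"
  then obtain \<beta> where "limit_point r E \<beta>" "olt r \<alpha> \<beta>" "olt r \<beta> \<gamma>"
    using assms unfolding limit_point_def by blast
  then show "\<exists>x\<in>E. olt r \<alpha> x \<and> olt r x \<gamma>" using olt_trans unfolding limit_point_def by blast
qed

lemma range_nat_not_unbounded_below:
  assumes "cof_eq r \<delta> k" "natLeq <o k"
  shows "\<not> unbounded_below r \<delta> (range (f :: nat \<Rightarrow> 'a))"
proof
  assume "unbounded_below r \<delta> (range f)"
  then have "k \<le>o |range f|" using assms(1) unfolding cof_eq_def by blast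
  also have "|range f| \<le>o |UNIV :: nat set|" by (rule card_of_image)
  also have "|UNIV :: nat set| =o natLeq" by (rule card_of_nat)
  finally show False using assms(2) not_ordLess_ordLeq by blast
qed

lemma increasing_seq_sup_below:
  assumes cof: "cof_eq r \<delta> k" "natLeq <o k"
    and incr: "\<And>n. olt r (f n) (f (Suc n))" and below: "\<And>n. olt r (f n) \<delta>"
  obtains \<gamma> where "olt r \<gamma> \<delta>" "\<And>n. olt r (f n) \<gamma>" "\<And>\<alpha>. olt r \<alpha> \<gamma> \<Longrightarrow> \<exists>n. olt r \<alpha> (f n)"
proof -
  have "range f \<subseteq> underS \<delta>" using below by (auto simp: underS_iff_olt)
  then obtain u where "u \<in> underS \<delta>" "\<forall>\<beta>\<in>range f. (u, \<beta>) \<notin> r"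
    using range_nat_not_unbounded_below[OF cof, of f] unfolding unbounded_below_def by blast
  then have u: "olt r u \<delta>" "\<And>n. (u, f n) \<notin> r" by (auto simp: underS_iff_olt)
  have bound: "\<And>n. (f n, u) \<in> r"
    using u le_or_olt olt_FieldD(1) below olt_imp_le by metis
  obtain \<gamma> where "(\<gamma>, u) \<in> r" "\<And>n. olt r (f n) \<gamma>" "\<And>\<alpha>. olt r \<alpha> \<gamma> \<Longrightarrow> \<exists>n. olt r \<alpha> (f n)"
    by (rule bounded_increasing_seq_sup[where f = f, OF incr bound]) blast
  then show thesis using that u(1) le_olt_trans by blast
qed

lemma unbounded_below_exists_olt:
  assumes cof: "cof_eq r \<delta> k" "natLeq <o k"
    and K: "unbounded_below r \<delta> K" and \<alpha>: "olt r \<alpha> \<delta>"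
  shows "\<exists>\<beta>\<in>K. olt r \<alpha> \<beta>"
proof (rule ccontr)
  assume none_above: "\<not> ?thesis"
  have "unbounded_below r \<delta> (range (\<lambda>_ :: nat. \<alpha>))"
    unfolding unbounded_below_def
  proof (intro conjI ballI)
    show "range (\<lambda>_ :: nat. \<alpha>) \<subseteq> underS \<delta>" using \<alpha> by (auto simp: underS_iff_olt)
    fix \<alpha>' assume "\<alpha>' \<in> underS \<delta>"
    then obtain \<beta> where \<beta>: "\<beta> \<in> K" "(\<alpha>', \<beta>) \<in> r" using K unfolding unbounded_below_def by blast
    then have "\<beta> \<in> Field r" by (blast intro: FieldI2)
    then have "(\<beta>, \<alpha>) \<in> r" using le_or_olt olt_FieldD(1)[OF \<alpha>] none_above \<beta>(1) by blast
    then show "\<exists>\<beta>\<in>range (\<lambda>_ :: nat. \<alpha>). (\<alpha>', \<beta>) \<in> r" using \<beta>(2) TRANS by (auto dest: transD)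
  qed
  then show False using range_nat_not_unbounded_below[OF cof] by blast
qed

lemma sup_eq_if_unbounded_below:
  assumes cof: "cof_eq r \<delta> k" "natLeq <o k"
    and K: "unbounded_below r \<delta> K" and \<delta>: "\<delta> \<in> Field r"
  shows "sup_eq r K \<delta>"
  unfolding sup_eq_def
proof (intro conjI ballI impI)
  show "\<delta> \<in> Field r" by fact
  show "(\<beta>, \<delta>) \<in> r" if "\<beta> \<in> K" for \<beta>
    using K that unfolding unbounded_below_def Order_Relation.underS_def by blast
next
  fix \<gamma> assume \<gamma>: "\<gamma> \<in> Field r" "\<forall>\<beta>\<in>K. (\<beta>, \<gamma>) \<in> r"
  show "(\<delta>, \<gamma>) \<in> r"
  proof (rule ccontr)
    assume "(\<delta>, \<gamma>) \<notin> r"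
    then have "olt r \<gamma> \<delta>" using le_or_olt \<delta> \<gamma>(1) by blast
    then obtain \<beta> where "\<beta> \<in> K" "olt r \<gamma> \<beta>" using unbounded_below_exists_olt[OF cof K] by blast
    then show False using \<gamma>(2) olt_not_le by blast
  qed
qed

lemma otp_eq_if_unbounded_subset:
  assumes cof: "cof_eq r \<delta> k" and K: "unbounded_below r \<delta> K" and KC: "K \<subseteq> C"
    and C: "C \<subseteq> Field r" "otp_eq r C k"
  shows "otp_eq r K k"
proof -
  have "Restr r K = Restr (Restr r C) K" using KC by blast
  also have "\<dots> \<le>o Restr r C"
    using Restr_ordLeq[OF Well_order_Restr[OF WELL]] KC Refl_Field_Restr2[OF REFL C(1)] by simp
  also have "Restr r C =o k" using C(2) unfolding otp_eq_def .
  finally have "Restr r K \<le>o k" .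
  moreover have "k \<le>o |K|" using cof K unfolding cof_eq_def by blast
  moreover have "|K| \<le>o Restr r K"
    using card_of_least well_order_on_Restr[OF WELL] KC C(1) by blast
  ultimately show ?thesis unfolding otp_eq_def using ordIso_iff_ordLeq ordLeq_transitive by blast
qed

text \<open>Alternate between \<open>C\<close> and \<open>E\<close>; as \<open>cf \<delta> > \<omega>\<close>, the supremum of the resulting
  \<open>\<omega>\<close>-sequence stays below \<open>\<delta>\<close>.\<close>

lemma common_limit_point_below:
  assumes cof: "cof_eq r \<delta> k" "natLeq <o k"
    and C: "\<And>\<beta>. olt r \<beta> \<delta> \<Longrightarrow> \<exists>x\<in>C. olt r \<beta> x \<and> olt r x \<delta>"
    and E: "\<And>\<beta>. olt r \<beta> \<delta> \<Longrightarrow> \<exists>x\<in>E. olt r \<beta> x \<and> olt r x \<delta>"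
    and \<alpha>: "olt r \<alpha> \<delta>"
  obtains \<gamma> where "olt r \<alpha> \<gamma>" "olt r \<gamma> \<delta>" "limit_point r C \<gamma>" "limit_point r E \<gamma>"
proof -
  obtain h where h: "\<And>\<beta>. olt r \<beta> \<delta> \<Longrightarrow> h \<beta> \<in> C \<and> olt r \<beta> (h \<beta>) \<and> olt r (h \<beta>) \<delta>"
    using C by metis
  obtain g where g: "\<And>\<beta>. olt r \<beta> \<delta> \<Longrightarrow> g \<beta> \<in> E \<and> olt r \<beta> (g \<beta>) \<and> olt r (g \<beta>) \<delta>"
    using E by metis
  define f where "f = rec_nat \<alpha> (\<lambda>_ \<beta>. g (h \<beta>))"
  have f0: "f 0 = \<alpha>" and fSuc: "f (Suc n) = g (h (f n))" for n
    unfolding f_def by simp_all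
  have below: "\<And>n. olt r (f n) \<delta>"
    subgoal for n by (induction n) (use \<alpha> h g in \<open>simp_all add: f0 fSuc\<close>)
    done
  have step: "h (f n) \<in> C \<and> olt r (f n) (h (f n)) \<and> olt r (h (f n)) (f (Suc n)) \<and> f (Suc n) \<in> E" for n
    using h[OF below[of n]] g fSuc by simp
  have incr: "\<And>n. olt r (f n) (f (Suc n))"
    using step olt_trans by blast
  obtain \<gamma> where \<gamma>: "olt r \<gamma> \<delta>" "\<And>n. olt r (f n) \<gamma>" "\<And>\<alpha>. olt r \<alpha> \<gamma> \<Longrightarrow> \<exists>n. olt r \<alpha> (f n)"
    using increasing_seq_sup_below[where f = f, OF cof incr below] by blast
  have "\<And>n. \<exists>x\<in>C. olt r (f n) x \<and> (x, f (Suc n)) \<in> r"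
    using step olt_imp_le by blast
  with \<gamma>(2,3) have "limit_point r C \<gamma>" by (rule limit_point_if_interleaved)
  moreover have "\<And>n. \<exists>x\<in>E. olt r (f n) x \<and> (x, f (Suc n)) \<in> r"
    using step incr olt_FieldD REFL by (blast dest: refl_onD)
  with \<gamma>(2,3) have "limit_point r E \<gamma>" by (rule limit_point_if_interleaved)
  ultimately show thesis using that \<gamma>(1) \<gamma>(2)[of 0] f0 by simp
qed

lemma unbounded_below_Int_club:
  assumes cof: "cof_eq r \<delta> k" "natLeq <o k" and C: "club_below r \<delta> C"
    and E: "club r E" and \<delta>E: "limit_point r E \<delta>"
  shows "unbounded_below r \<delta> (C \<inter> E)"
  unfolding unbounded_below_def
proof (intro conjI ballI)
  have Cu: "unbounded_below r \<delta> C" and Cc: "closed_below r \<delta> C"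
    using C unfolding club_below_def by blast+
  show "C \<inter> E \<subseteq> underS \<delta>" using Cu unfolding unbounded_below_def by blast
  fix \<alpha> assume "\<alpha> \<in> underS \<delta>"
  then have \<alpha>: "olt r \<alpha> \<delta>" by (simp add: underS_iff_olt)
  have "\<exists>x\<in>C. olt r \<beta> x \<and> olt r x \<delta>" if \<beta>: "olt r \<beta> \<delta>" for \<beta>
  proof -
    obtain x where "x \<in> C" "olt r \<beta> x" using unbounded_below_exists_olt[OF cof Cu \<beta>] by blast
    moreover have "x \<in> underS \<delta>" using Cu \<open>x \<in> C\<close> unfolding unbounded_below_def by blast
    then have "olt r x \<delta>" by (simp add: underS_iff_olt)
    ultimately show ?thesis by blast
  qed
  moreover have "\<exists>x\<in>E. olt r \<beta> x \<and> olt r x \<delta>" if "olt r \<beta> \<delta>" for \<beta>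
    using \<delta>E that unfolding limit_point_def by blast
  ultimately obtain \<gamma> where \<gamma>: "olt r \<alpha> \<gamma>" "olt r \<gamma> \<delta>" "limit_point r C \<gamma>" "limit_point r E \<gamma>"
    using common_limit_point_below[OF cof _ _ \<alpha>] by blast
  have "\<gamma> \<in> underS \<delta>" using \<gamma>(2) by (simp add: underS_iff_olt)
  then have "\<gamma> \<in> C" using Cc \<gamma>(3) unfolding closed_below_def by blast
  moreover have "\<gamma> \<in> E" using E \<gamma>(4) by (rule club_limit_point_mem)
  ultimately show "\<exists>\<beta>\<in>C \<inter> E. (\<alpha>, \<beta>) \<in> r" using \<gamma>(1) olt_imp_le by blast
qed

end

section \<open>Clubs of an uncountable regular cardinal\<close>

locale uncountable_regular_card =
  fixes r :: "'a rel"
  assumes card_order: "Card_order r" and regular: "regularCard r" and uncountable: "natLeq <o r"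
begin

sublocale wo_rel r using card_order by (rule Card_order_wo_rel)

lemma infinite_Field: "infinite (Field r)"
proof -
  have "natLeq \<le>o r" using uncountable by (rule ordLess_imp_ordLeq)
  also have "r =o |Field r|" using card_of_Field_ordIso[OF card_order] by (rule ordIso_symmetric)
  finally show ?thesis using infinite_iff_natLeq_ordLeq by blast
qed

lemma finite_ordLess:
  assumes "finite A"
  shows "|A| <o r"
proof -
  have "|A| <o |Field r|"
    using finite_ordLess_infinite[of "|A|" "|Field r|"] assms infinite_Field
    by (simp add: card_of_well_order_on Field_card_of)
  then show ?thesis using card_of_Field_ordIso[OF card_order] by (rule ordLess_ordIso_trans)
qed

lemma range_nat_ordLess: "|range (f :: nat \<Rightarrow> 'a)| <o r"
proof -
  have "|range f| \<le>o |UNIV :: nat set|" by (rule card_of_image)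
  also have "|UNIV :: nat set| =o natLeq" by (rule card_of_nat)
  finally show ?thesis using uncountable by (rule ordLeq_ordLess_trans)
qed

lemma small_set_bounded:
  assumes "A \<subseteq> Field r" "|A| <o r"
  obtains b where "b \<in> Field r" "\<And>a. a \<in> A \<Longrightarrow> (a, b) \<in> r"
proof -
  have "\<not> cofinal A r"
  proof
    assume "cofinal A r"
    then have "|A| =o r" using regular assms(1) unfolding regularCard_def by blast
    then show False using assms(2) not_ordLess_ordIso by blast
  qed
  then obtain b where b: "b \<in> Field r" "\<forall>a\<in>A. \<not> (b \<noteq> a \<and> (b, a) \<in> r)"
    unfolding cofinal_def by blast
  have "(a, b) \<in> r" if "a \<in> A" for a
    using b that assms(1) le_or_olt[of a b] unfolding olt_def by blast
  then show thesis using that b(1) by blast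
qed

lemma club_exists_olt:
  assumes "club r E" "a \<in> Field r"
  shows "\<exists>e\<in>E. olt r a e"
proof -
  obtain b where b: "olt r a b"
    using infinite_Card_order_limit[OF card_order infinite_Field assms(2)] unfolding olt_def by blast
  then obtain e where "e \<in> E" "(b, e) \<in> r" using assms(1) olt_FieldD(2) unfolding club_def by blast
  then show ?thesis using b olt_le_trans by blast
qed

text \<open>Climb through all the clubs in turn along an \<open>\<omega>\<close>-sequence; regularity of \<open>\<lambda>\<close> bounds
  each step and the whole sequence, and its supremum is a limit point of every club.\<close>

lemma common_limit_point_above:
  assumes F: "F \<noteq> {}" "\<And>E. E \<in> F \<Longrightarrow> club r E" "|F| <o r" and \<alpha>: "\<alpha> \<in> Field r"
  obtains \<gamma> where "olt r \<alpha> \<gamma>" "\<And>E. E \<in> F \<Longrightarrow> limit_point r E \<gamma>"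
proof -
  obtain e where e: "\<And>E \<beta>. E \<in> F \<Longrightarrow> \<beta> \<in> Field r \<Longrightarrow> e E \<beta> \<in> E \<and> olt r \<beta> (e E \<beta>)"
    using club_exists_olt F(2) by metis
  have "\<exists>b. b \<in> Field r \<and> (\<forall>E\<in>F. (e E \<beta>, b) \<in> r)" if \<beta>: "\<beta> \<in> Field r" for \<beta>
  proof -
    have "(\<lambda>E. e E \<beta>) ` F \<subseteq> Field r" using e \<beta> olt_FieldD(2) by blast
    moreover have "|(\<lambda>E. e E \<beta>) ` F| <o r" using card_of_image F(3) by (rule ordLeq_ordLess_trans)
    ultimately show ?thesis by (rule small_set_bounded) blast
  qed
  then obtain up where up: "\<And>\<beta>. \<beta> \<in> Field r \<Longrightarrow> up \<beta> \<in> Field r \<and> (\<forall>E\<in>F. (e E \<beta>, up \<beta>) \<in> r)"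
    by metis
  obtain E0 where E0: "E0 \<in> F" using F(1) by blast
  define f where "f = rec_nat \<alpha> (\<lambda>_. up)"
  have f0: "f 0 = \<alpha>" and fSuc: "\<And>n. f (Suc n) = up (f n)"
    unfolding f_def by simp_all
  have fF: "\<And>n. f n \<in> Field r"
    subgoal for n by (induction n) (simp_all add: f0 fSuc \<alpha> up)
    done
  have between: "\<And>n. e E (f n) \<in> E \<and> olt r (f n) (e E (f n)) \<and> (e E (f n), f (Suc n)) \<in> r"
    if "E \<in> F" for E
    using e[OF that fF] up[OF fF] that fSuc by simp
  have incr: "\<And>n. olt r (f n) (f (Suc n))"
    using between[OF E0] olt_le_trans by blast
  obtain u where "\<And>a. a \<in> range f \<Longrightarrow> (a, u) \<in> r"
    using small_set_bounded[OF _ range_nat_ordLess] fF by blast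
  then have bound: "\<And>n. (f n, u) \<in> r" by simp
  obtain \<gamma> where \<gamma>: "(\<gamma>, u) \<in> r" "\<And>n. olt r (f n) \<gamma>" "\<And>\<beta>. olt r \<beta> \<gamma> \<Longrightarrow> \<exists>n. olt r \<beta> (f n)"
    by (rule bounded_increasing_seq_sup[where f = f, OF incr bound]) blast
  have "limit_point r E \<gamma>" if "E \<in> F" for E
  proof (rule limit_point_if_interleaved[OF \<gamma>(2,3)])
    show "\<exists>x\<in>E. olt r (f n) x \<and> (x, f (Suc n)) \<in> r" for n
      using between[OF that, of n] by blast
  qed
  then show thesis using that \<gamma>(2)[of 0] f0 by simp
qed

lemma club_Inter:
  assumes F: "F \<noteq> {}" "\<And>E. E \<in> F \<Longrightarrow> club r E" "|F| <o r"
  shows "club r (\<Inter>F)"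
  unfolding club_def
proof (intro conjI ballI impI)
  obtain E0 where "E0 \<in> F" using F(1) by blast
  then show "\<Inter>F \<subseteq> Field r" using club_subset_Field[OF F(2)] by blast
  show "\<gamma> \<in> \<Inter>F" if "limit_point r (\<Inter>F) \<gamma>" for \<gamma>
    using club_limit_point_mem[OF F(2) limit_point_mono[OF that]] by blast
  fix \<alpha> assume "\<alpha> \<in> Field r"
  then obtain \<gamma> where \<gamma>: "olt r \<alpha> \<gamma>" "\<And>E. E \<in> F \<Longrightarrow> limit_point r E \<gamma>"
    using common_limit_point_above[OF F] by blast
  have "\<gamma> \<in> \<Inter>F" using club_limit_point_mem[OF F(2) \<gamma>(2)] by blast
  then show "\<exists>\<beta>\<in>\<Inter>F. (\<alpha>, \<beta>) \<in> r" using olt_imp_le[OF \<gamma>(1)] by blast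
qed

lemma club_Int:
  assumes "club r A" "club r B"
  shows "club r (A \<inter> B)"
proof -
  have "club r (\<Inter>{A, B})"
    using assms finite_ordLess[of "{A, B}"] by (intro club_Inter) auto
  then show ?thesis by simp
qed

lemma club_Int_INT:
  assumes E': "club r E'" and H: "\<And>j. j \<in> J \<Longrightarrow> club r (H j)" and J: "|J| <o r"
  shows "club r (E' \<inter> (\<Inter>j\<in>J. H j))"
proof -
  have "|{E'}| <o r" by (rule finite_ordLess) simp
  moreover have "|H ` J| <o r" using card_of_image J by (rule ordLeq_ordLess_trans)
  ultimately have "|{E'} \<union> H ` J| <o r"
    by (rule card_of_Un_ordLess_infinite_Field[OF infinite_Field card_order])
  then have "club r (\<Inter>(insert E' (H ` J)))" using E' H by (intro club_Inter) auto
  then show ?thesis by simp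
qed

lemma club_limit_points:
  assumes E: "club r E"
  shows "club r {\<gamma>. limit_point r E \<gamma>}"
  unfolding club_def
proof (intro conjI ballI impI)
  show "{\<gamma>. limit_point r E \<gamma>} \<subseteq> Field r" unfolding limit_point_def by blast
  show "\<gamma> \<in> {\<gamma>. limit_point r E \<gamma>}" if "limit_point r {\<gamma>. limit_point r E \<gamma>} \<gamma>" for \<gamma>
    using limit_point_limit_points[OF that] by simp
  fix \<alpha> assume \<alpha>: "\<alpha> \<in> Field r"
  have "|{E}| <o r" by (rule finite_ordLess) simp
  then obtain \<gamma> where "olt r \<alpha> \<gamma>" "\<And>X. X \<in> {E} \<Longrightarrow> limit_point r X \<gamma>"
    using common_limit_point_above[of "{E}" \<alpha>] E \<alpha> by auto
  then show "\<exists>\<beta>\<in>{\<gamma>. limit_point r E \<gamma>}. (\<alpha>, \<beta>) \<in> r" using olt_imp_le by blast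
qed

lemma descending_club_chain:
  assumes s: "Well_order s" "|Field s| <o r" and E': "club r E'"
    and G: "\<And>E. club r E \<Longrightarrow> E \<subseteq> E' \<Longrightarrow> club r (G E)"
  obtains Es where "\<And>i. club r (Es i)" "\<And>i. Es i \<subseteq> E'"
    "\<And>i j. (j, i) \<in> s \<Longrightarrow> j \<noteq> i \<Longrightarrow> Es i \<subseteq> G (Es j)"
proof -
  let ?R = "s - Id"
  have wf: "wf ?R" using s(1) by (rule wo_rel.WF[OF wo_rel.intro])
  define Es where "Es = wfrec ?R (\<lambda>Es i. E' \<inter> (\<Inter>j\<in>{j. (j, i) \<in> ?R}. G (Es j)))"
  have Es_eq: "Es i = E' \<inter> (\<Inter>j\<in>{j. (j, i) \<in> ?R}. G (Es j))" for i
    unfolding Es_def by (subst wfrec[OF wf]) (simp add: cut_apply)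
  have club: "club r (Es i)" for i
  proof (induction i rule: wf_induct_rule[OF wf])
    case (1 i)
    have "{j. (j, i) \<in> ?R} \<subseteq> Field s" by (auto intro: FieldI1)
    from card_of_mono1[OF this] s(2) have small: "|{j. (j, i) \<in> ?R}| <o r"
      by (rule ordLeq_ordLess_trans)
    have "club r (G (Es j))" if "j \<in> {j. (j, i) \<in> ?R}" for j
      using G 1 that Es_eq[of j] by blast
    from E' this small have "club r (E' \<inter> (\<Inter>j\<in>{j. (j, i) \<in> ?R}. G (Es j)))"
      by (rule club_Int_INT)
    then show ?case using Es_eq[of i] by simp
  qed
  show thesis
  proof (rule that)
    show "club r (Es i)" for i by (rule club)
    show "Es i \<subseteq> E'" for i using Es_eq[of i] by blast
    show "Es i \<subseteq> G (Es j)" if "(j, i) \<in> s" "j \<noteq> i" for i j using Es_eq[of i] that by blast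
  qed
qed

lemma club_escaping_if_not_stationary:
  assumes k: "natLeq <o k" and S: "S \<subseteq> {\<delta>\<in>Field r. cof_eq r \<delta> k}"
    and c: "\<forall>\<delta>\<in>S. club_below r \<delta> (c \<delta>) \<and> otp_eq r (c \<delta>) k"
    and E: "club r E" and E'': "club r E''"
    and not_stationary: "\<not> stationary r {\<delta>\<in>S. c \<delta> \<inter> E \<subseteq> E'' \<and> sup_eq r (c \<delta> \<inter> E) \<delta>
                                          \<and> otp_eq r (c \<delta> \<inter> E) k}"
  shows "\<exists>D. club r D \<and> (\<forall>\<delta>\<in>S. \<delta> \<in> D \<longrightarrow> \<not> c \<delta> \<inter> E \<subseteq> D)"
proof -
  obtain D0 where D0: "club r D0"
    "{\<delta>\<in>S. c \<delta> \<inter> E \<subseteq> E'' \<and> sup_eq r (c \<delta> \<inter> E) \<delta> \<and> otp_eq r (c \<delta> \<inter> E) k} \<inter> D0 = {}"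
    using not_stationary S unfolding stationary_def by blast
  define D where "D = {\<gamma>. limit_point r E \<gamma>} \<inter> E'' \<inter> D0"
  have "club r D" unfolding D_def using club_limit_points[OF E] E'' D0(1) by (intro club_Int)
  moreover have "\<not> c \<delta> \<inter> E \<subseteq> D" if \<delta>: "\<delta> \<in> S" "\<delta> \<in> D" for \<delta>
  proof
    assume sub: "c \<delta> \<inter> E \<subseteq> D"
    have cof: "cof_eq r \<delta> k" and \<delta>F: "\<delta> \<in> Field r" using S \<delta>(1) by blast+
    have c\<delta>: "club_below r \<delta> (c \<delta>)" "otp_eq r (c \<delta>) k" using c \<delta>(1) by blast+
    have unbounded: "unbounded_below r \<delta> (c \<delta> \<inter> E)"
      using unbounded_below_Int_club[OF cof k c\<delta>(1) E] \<delta>(2) unfolding D_def by blast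
    have "sup_eq r (c \<delta> \<inter> E) \<delta>"
      using cof k unbounded \<delta>F by (rule sup_eq_if_unbounded_below)
    moreover have "otp_eq r (c \<delta> \<inter> E) k"
      using otp_eq_if_unbounded_subset[OF cof unbounded _ club_below_subset_Field[OF c\<delta>(1)] c\<delta>(2)]
      by blast
    moreover have "c \<delta> \<inter> E \<subseteq> E''" using sub unfolding D_def by blast
    ultimately show False using D0(2) \<delta> unfolding D_def by blast
  qed
  ultimately show ?thesis by blast
qed

lemma large_guess_if_escaping_clubs:
  assumes s: "Well_order s" "|Field s| <o r" and S: "stationary r S" and E': "club r E'"
    and escape: "\<And>E. club r E \<Longrightarrow> E \<subseteq> E' \<Longrightarrow>
      \<exists>D. club r D \<and> (\<forall>\<delta>\<in>S. \<delta> \<in> D \<longrightarrow> \<not> c \<delta> \<inter> E \<subseteq> D)"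
  obtains \<delta> where "\<delta> \<in> S" "|Field s| \<le>o |c \<delta>|"
proof -
  define G where "G E = (SOME D. club r D \<and> (\<forall>\<delta>\<in>S. \<delta> \<in> D \<longrightarrow> \<not> c \<delta> \<inter> E \<subseteq> D))" for E
  have G: "club r (G E)" "\<And>\<delta>. \<delta> \<in> S \<Longrightarrow> \<delta> \<in> G E \<Longrightarrow> \<not> c \<delta> \<inter> E \<subseteq> G E"
    if "club r E" "E \<subseteq> E'" for E
    using someI_ex[OF escape[OF that]] unfolding G_def by blast+
  obtain Es where Es: "\<And>i. club r (Es i)" "\<And>i. Es i \<subseteq> E'"
    "\<And>i j. (j, i) \<in> s \<Longrightarrow> j \<noteq> i \<Longrightarrow> Es i \<subseteq> G (Es j)"
    using descending_club_chain[where G = G, OF s E' G(1)] by blast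
  have "club r (E' \<inter> (\<Inter>j\<in>Field s. G (Es j)))"
    using E' G(1)[OF Es(1,2)] s(2) by (rule club_Int_INT)
  then obtain \<delta> where \<delta>: "\<delta> \<in> S" "\<And>j. j \<in> Field s \<Longrightarrow> \<delta> \<in> G (Es j)"
    using S unfolding stationary_def by blast
  have "|Field s| \<le>o |c \<delta>|"
    using wo_rel.TOTAL[OF wo_rel.intro[OF s(1)]] Es(3) G(2)[OF Es(1,2) \<delta>(1) \<delta>(2)]
    by (rule card_of_Field_ordLeq_if_escaping)
  with \<delta>(1) show thesis by (rule that)
qed

end

theorem mainTheorem3:
  fixes r :: "'a rel" and k :: "'b rel"
    and S :: "'a set" and c :: "'a \<Rightarrow> 'a set" and E' :: "'a set"
  assumes lam: "Card_order r" "regularCard r"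
    and kap: "Card_order k" "regularCard k"
    and aleph0: "ordLess2 natLeq k"
    and succ: "ordLess2 (cardSuc k) r"
    and S_sub: "S \<subseteq> {\<delta>\<in>Field r. cof_eq r \<delta> k}"
    and S_stat: "stationary r S"
    and c_club: "\<forall>\<delta>\<in>S. club_below r \<delta> (c \<delta>) \<and> otp_eq r (c \<delta>) k"
    and E'_club: "club r E'"
  shows "\<exists>E. club r E \<and> E \<subseteq> E' \<and>
           (\<forall>\<delta>\<in>S. closed_below r \<delta> (c \<delta> \<inter> E)) \<and>
           (\<forall>E''. club r E'' \<longrightarrow>
              stationary r {\<delta>\<in>S. c \<delta> \<inter> E \<subseteq> E'' \<and> sup_eq r (c \<delta> \<inter> E) \<delta>
                                 \<and> otp_eq r (c \<delta> \<inter> E) k})"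
proof (rule ccontr)
  assume no_club: "\<not> ?thesis"
  have k_less: "k <o cardSuc k" by (rule cardSuc_greater[OF kap(1)])
  have "natLeq <o r" using aleph0 ordLess_transitive[OF k_less succ] by (rule ordLess_transitive)
  with lam interpret uncountable_regular_card r by unfold_locales
  have "\<exists>D. club r D \<and> (\<forall>\<delta>\<in>S. \<delta> \<in> D \<longrightarrow> \<not> c \<delta> \<inter> E \<subseteq> D)" if E: "club r E" "E \<subseteq> E'" for E
  proof -
    have "closed_below r \<delta> (c \<delta> \<inter> E)" if "\<delta> \<in> S" for \<delta>
      using c_club that E(1) unfolding club_below_def by (blast intro: closed_below_Int_club)
    then obtain E'' where "club r E''" "\<not> stationary r {\<delta>\<in>S. c \<delta> \<inter> E \<subseteq> E''
        \<and> sup_eq r (c \<delta> \<inter> E) \<delta> \<and> otp_eq r (c \<delta> \<inter> E) k}"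
      using spec[OF no_club[unfolded not_ex], of E] E by auto
    then show ?thesis by (rule club_escaping_if_not_stationary[OF aleph0 S_sub c_club E(1)])
  qed
  moreover have s: "Card_order (cardSuc k)" by (rule cardSuc_Card_order[OF kap(1)])
  moreover have "|Field (cardSuc k)| <o r" using card_of_Field_ordIso[OF s] succ
    by (rule ordIso_ordLess_trans)
  ultimately obtain \<delta> where \<delta>: "\<delta> \<in> S" "|Field (cardSuc k)| \<le>o |c \<delta>|"
    using large_guess_if_escaping_clubs[OF card_order_on_well_order_on[OF s] _ S_stat E'_club]
    by blast
  have "|c \<delta>| \<le>o k"
    using c_club \<delta>(1) club_below_subset_Field[of r \<delta> "c \<delta>"] WELL
    by (blast intro: card_of_ordLeq_if_otp_eq)
  with \<delta>(2) have "|Field (cardSuc k)| \<le>o k" by (rule ordLeq_transitive)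
  with ordIso_symmetric[OF card_of_Field_ordIso[OF s]] have "cardSuc k \<le>o k"
    by (rule ordIso_ordLeq_trans)
  with not_ordLess_ordLeq[OF k_less] show False by contradiction
qed

end
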